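(* Let $P$ be a finite poset. For every $f\in(\mathbb R^+)^P$, $$\rho_{\mathcal B}(f)=\alpha_1\bigl(\alpha_3(\alpha_2(f))\bigr),$$ where the birational maps $\alpha_1,\alpha_2,\alpha_3:(\mathbb R^+)^P\to(\mathbb R^+)^P$ are defined below.
   Context: For a finite poset $P$, let $\widehat P=P\cup\{\hat0,\hat1\}$ with $\hat0<x<\hat1$ for all $x\in P$; write $y\lessdot x$ ($x$ covers $y$) when $y<x$ and no $z$ satisfies $y<z<x$; for $x\in P$ let $x^+=\{y\in\widehat P: y\gtrdot x\}$ and $x^-=\{y\in\widehat P:y\lessdot x\}$. Each $f:P\to\mathbb R^+$ (positive reals) is extended to $\hat f$ on $\widehat P$ by $\hat f(\hat0)=\hat f(\hat1)=1$. The parallel sum of positive reals $s_1,\dots,s_m$ is $s_1\parallel\cdots\parallel s_m=(1/s_1+\cdots+1/s_m)^{-1}$. For $x\in P$ the birational toggle $\tau_x:(\mathbb R^+)^P\to(\mathbb R^+)^P$ leaves $f(y)$ unchanged for $y\neq x$ and sets $(\tau_xf)(x)=\frac{1}{f(x)}\Bigl(\sum_{y\in x^-}\hat f(y)\Bigr)\Bigl(\,\big\|_{y\in x^+}\hat f(y)\Bigr)$. Birational rowmotion is $\rho_{\mathcal B}=\tau_{x_1}\circ\cdots\circ\tau_{x_p}$ for any linear extension $x_1,\dots,x_p$ of $P$ (top elements toggled first; independent of the choice). Define $(\alpha_1 f)(x)=1/f(x)$; $(\alpha_2f)(x)=\big\|_{y\in x^-}\,\bigl(f(x)/\hat f(y)\bigr)$;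 and $\alpha_3 f$ recursively from the top by $(\alpha_3f)(\hat1)=1$ and $(\alpha_3f)(x)=f(x)\sum_{y\in x^+}(\alpha_3f)(y)$ for $x\in P$. *)

theory Defs
  imports Main "HOL.Real"
begin

datatype 'a hat = Bot | Top | Elem 'a

definition partial_order_on' :: "'a set \<Rightarrow> ('a \<Rightarrow> 'a \<Rightarrow> bool) \<Rightarrow> bool" where
  "partial_order_on' P le \<longleftrightarrow>
     (\<forall>x\<in>P. le x x) \<and>
     (\<forall>x\<in>P. \<forall>y\<in>P. le x y \<and> le y x \<longrightarrow> x = y) \<and>
     (\<forall>x\<in>P. \<forall>y\<in>P. \<forall>z\<in>P. le x y \<and> le y z \<longrightarrow> le x z)"

definition hatset :: "'a set \<Rightarrow> 'a hat set" where
  "hatset P = {Bot, Top} \<union> Elem ` P"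

fun hle :: "('a \<Rightarrow> 'a \<Rightarrow> bool) \<Rightarrow> 'a hat \<Rightarrow> 'a hat \<Rightarrow> bool" where
  "hle le Bot _ = True"
| "hle le _ Top = True"
| "hle le (Elem x) (Elem y) = le x y"
| "hle le _ _ = False"

definition hless :: "('a \<Rightarrow> 'a \<Rightarrow> bool) \<Rightarrow> 'a hat \<Rightarrow> 'a hat \<Rightarrow> bool" where
  "hless le a b \<longleftrightarrow> hle le a b \<and> a \<noteq> b"

definition covers :: "'a set \<Rightarrow> ('a \<Rightarrow> 'a \<Rightarrow> bool) \<Rightarrow> 'a hat \<Rightarrow> 'a hat \<Rightarrow> bool" where
  "covers P le a b \<longleftrightarrow> a \<in> hatset P \<and> b \<in> hatset P \<and> hless le a b \<and>
     \<not> (\<exists>z\<in>hatset P. hless le a z \<and> hless le z b)"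

definition upc :: "'a set \<Rightarrow> ('a \<Rightarrow> 'a \<Rightarrow> bool) \<Rightarrow> 'a \<Rightarrow> 'a hat set" where
  "upc P le x = {y \<in> hatset P. covers P le (Elem x) y}"

definition downc :: "'a set \<Rightarrow> ('a \<Rightarrow> 'a \<Rightarrow> bool) \<Rightarrow> 'a \<Rightarrow> 'a hat set" where
  "downc P le x = {y \<in> hatset P. covers P le y (Elem x)}"

fun fhat :: "('a \<Rightarrow> real) \<Rightarrow> 'a hat \<Rightarrow> real" where
  "fhat f Bot = 1"
| "fhat f Top = 1"
| "fhat f (Elem x) = f x"

definition psum :: "'b set \<Rightarrow> ('b \<Rightarrow> real) \<Rightarrow> real" where
  "psum S g = 1 / (\<Sum>y\<in>S. 1 / g y)"

definition toggle :: "'a set \<Rightarrow> ('a \<Rightarrow> 'a \<Rightarrow> bool) \<Rightarrow> 'a \<Rightarrow> ('a \<Rightarrow> real) \<Rightarrow> ('a \<Rightarrow> real)" where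
  "toggle P le x f = f(x := (1 / f x) * (\<Sum>y\<in>downc P le x. fhat f y) * psum (upc P le x) (fhat f))"

definition linear_extension :: "'a set \<Rightarrow> ('a \<Rightarrow> 'a \<Rightarrow> bool) \<Rightarrow> 'a list \<Rightarrow> bool" where
  "linear_extension P le xs \<longleftrightarrow> distinct xs \<and> set xs = P \<and>
     (\<forall>i<length xs. \<forall>j<length xs. le (xs ! i) (xs ! j) \<longrightarrow> i \<le> j)"

text \<open>Birational rowmotion along a linear extension x1,...,xp:
  tau_{x1} o ... o tau_{xp} (so xp, a top element, is toggled first).\<close>
definition rowmotion_along :: "'a set \<Rightarrow> ('a \<Rightarrow> 'a \<Rightarrow> bool) \<Rightarrow> 'a list \<Rightarrow> ('a \<Rightarrow> real) \<Rightarrow> ('a \<Rightarrow> real)" where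
  "rowmotion_along P le xs = foldr (\<lambda>x g. toggle P le x \<circ> g) xs id"

definition alpha1 :: "('a \<Rightarrow> real) \<Rightarrow> ('a \<Rightarrow> real)" where
  "alpha1 f x = 1 / f x"

definition alpha2 :: "'a set \<Rightarrow> ('a \<Rightarrow> 'a \<Rightarrow> bool) \<Rightarrow> ('a \<Rightarrow> real) \<Rightarrow> ('a \<Rightarrow> real)" where
  "alpha2 P le f x = psum (downc P le x) (\<lambda>y. f x / fhat f y)"

text \<open>alpha3 is defined recursively from the top: the unique function g on P-hat with
  g(top) = 1 and g(x) = f(x) * sum of g over the upper covers of x (x in P);
  values off P \<union> {top} are normalised to 0 to make it unique.\<close>
definition alpha3_hat :: "'a set \<Rightarrow> ('a \<Rightarrow> 'a \<Rightarrow> bool) \<Rightarrow> ('a \<Rightarrow> real) \<Rightarrow> 'a hat \<Rightarrow> real" where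
  "alpha3_hat P le f = (THE g. g Top = 1 \<and> g Bot = 0 \<and>
      (\<forall>x. x \<notin> P \<longrightarrow> g (Elem x) = 0) \<and>
      (\<forall>x\<in>P. g (Elem x) = f x * (\<Sum>y\<in>upc P le x. g y)))"

definition alpha3 :: "'a set \<Rightarrow> ('a \<Rightarrow> 'a \<Rightarrow> bool) \<Rightarrow> ('a \<Rightarrow> real) \<Rightarrow> ('a \<Rightarrow> real)" where
  "alpha3 P le f x = alpha3_hat P le f (Elem x)"

end

theory Submission
  imports Defs
begin

text \<open>When rowmotion reaches \<open>x\<close>, the elements above \<open>x\<close> have already been toggled and
  those below have not, so \<open>\<rho>(f)(x) = (\<Sum>\<^bsub>y\<lessdot>x\<^esub> f(y)) / f(x) \<cdot> \<parallel>\<^bsub>x\<lessdot>y\<^esub> \<rho>(f)(y)\<close>.  Inverting,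
  \<open>1/\<rho>(f)\<close> satisfies exactly the top-down recursion defining \<open>\<alpha>\<^sub>3\<close> with weights \<open>\<alpha>\<^sub>2(f)\<close>,
  and that recursion has a unique solution.\<close>

lemma Elem_in_upcD: "Elem z \<in> upc P le x \<Longrightarrow> z \<in> P \<and> le x z \<and> z \<noteq> x"
  by (auto simp: upc_def covers_def hless_def hatset_def)

lemma Bot_notin_upc: "Bot \<notin> upc P le x"
  by (simp add: upc_def covers_def hless_def)

lemma Elem_in_downcD: "Elem z \<in> downc P le x \<Longrightarrow> le z x"
  by (auto simp: downc_def covers_def hless_def)

lemma fhat_eqI: "(\<And>z. y = Elem z \<Longrightarrow> F z = G z) \<Longrightarrow> fhat F y = fhat G y"
  by (cases y) auto

lemma psum_cong: "(\<And>y. y \<in> S \<Longrightarrow> g y = h y) \<Longrightarrow> psum S g = psum S h"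
  unfolding psum_def by (metis (mono_tags, lifting) sum.cong)

lemma alpha2_eq: "alpha2 P le f x = f x / (\<Sum>y\<in>downc P le x. fhat f y)"
  by (simp add: alpha2_def psum_def sum_divide_distrib[symmetric])

text \<open>An up-set of \<open>P\<close> listed along a linear extension, e.g.\ a suffix of a linear extension.
  Rowmotion toggles the list from its end, hence from the top down.\<close>

definition upset_list :: "'a set \<Rightarrow> ('a \<Rightarrow> 'a \<Rightarrow> bool) \<Rightarrow> 'a list \<Rightarrow> bool" where
  "upset_list P le ys \<longleftrightarrow> distinct ys \<and> set ys \<subseteq> P \<and>
     sorted_wrt (\<lambda>a b. \<not> le b a) ys \<and> (\<forall>z\<in>set ys. \<forall>y\<in>P. le z y \<longrightarrow> y \<in> set ys)"

lemma upset_list_ConsD: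
  assumes "upset_list P le (x # ys)"
  shows "upset_list P le ys" and "x \<in> P" and "x \<notin> set ys"
    and "\<And>z. z \<in> set ys \<Longrightarrow> \<not> le z x"
    and "\<And>y. y \<in> P \<Longrightarrow> le x y \<Longrightarrow> y \<noteq> x \<Longrightarrow> y \<in> set ys"
  using assms unfolding upset_list_def by (auto, metis)

lemma linear_extension_upset_list:
  assumes "linear_extension P le xs"
  shows "upset_list P le xs"
proof -
  have "sorted_wrt (\<lambda>a b. \<not> le b a) xs"
    unfolding sorted_wrt_iff_nth_less
    using assms unfolding linear_extension_def by (meson le_trans less_imp_le_nat not_le)
  then show ?thesis
    using assms by (auto simp: upset_list_def linear_extension_def)
qed

lemma top_down_recursion_unique:
  assumes "upset_list P le ys"
    and "\<forall>x\<in>P. g1 (Elem x) = h x * (\<Sum>y\<in>upc P le x. g1 y)"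
    and "\<forall>x\<in>P. g2 (Elem x) = h x * (\<Sum>y\<in>upc P le x. g2 y)"
    and "g1 Top = g2 Top"
  shows "\<forall>x\<in>set ys. g1 (Elem x) = g2 (Elem x)"
  using assms(1)
proof (induction ys)
  case Nil
  then show ?case by simp
next
  case (Cons x ys)
  note td = upset_list_ConsD[OF Cons.prems]
  have IH: "\<forall>z\<in>set ys. g1 (Elem z) = g2 (Elem z)"
    using Cons.IH td(1) .
  have "g1 y = g2 y" if "y \<in> upc P le x" for y
  proof (cases y)
    case (Elem z)
    with that have "z \<in> set ys"
      using td(5) Elem_in_upcD[of z P le x] by simp
    with IH Elem show ?thesis by simp
  qed (use assms(4) that in \<open>auto simp: Bot_notin_upc\<close>)
  then have "(\<Sum>y\<in>upc P le x. g1 y) = (\<Sum>y\<in>upc P le x. g2 y)"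
    by (rule sum.cong[OF refl])
  then show ?case
    using IH assms(2,3) td(2) by simp
qed

lemma alpha3_hat_eqI:
  assumes "linear_extension P le xs"
    and "g Top = 1" "g Bot = 0" "\<forall>x. x \<notin> P \<longrightarrow> g (Elem x) = 0"
    and rec: "\<forall>x\<in>P. g (Elem x) = h x * (\<Sum>y\<in>upc P le x. g y)"
  shows "alpha3_hat P le h = g"
  unfolding alpha3_hat_def
proof (rule the_equality)
  fix g' assume g': "g' Top = 1 \<and> g' Bot = 0 \<and> (\<forall>x. x \<notin> P \<longrightarrow> g' (Elem x) = 0) \<and>
      (\<forall>x\<in>P. g' (Elem x) = h x * (\<Sum>y\<in>upc P le x. g' y))"
  have "set xs = P"
    using assms(1) by (simp add: linear_extension_def)
  then have on_P: "\<forall>x\<in>P. g' (Elem x) = g (Elem x)"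
    using top_down_recursion_unique[OF linear_extension_upset_list[OF assms(1)], of g' h g]
      g' rec assms(2) by simp
  show "g' = g"
  proof
    fix y show "g' y = g y"
    proof (cases y)
      case (Elem z)
      then show ?thesis
        using g' assms(4) on_P by (cases "z \<in> P") simp_all
    qed (use g' assms(2,3) in simp_all)
  qed
qed (use assms in auto)

lemma rowmotion_along_Nil: "rowmotion_along P le [] f = f"
  by (simp add: rowmotion_along_def)

lemma rowmotion_along_Cons:
  "rowmotion_along P le (x # ys) f = toggle P le x (rowmotion_along P le ys f)"
  by (simp add: rowmotion_along_def)

lemma rowmotion_along_notin: "z \<notin> set ys \<Longrightarrow> rowmotion_along P le ys f z = f z"
  by (induction ys) (auto simp: rowmotion_along_Nil rowmotion_along_Cons toggle_def)

lemma rowmotion_along_eq: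
  assumes "upset_list P le ys" and "w \<in> set ys"
  shows "rowmotion_along P le ys f w =
    1 / f w * (\<Sum>y\<in>downc P le w. fhat f y) * psum (upc P le w) (fhat (rowmotion_along P le ys f))"
  using assms
proof (induction ys arbitrary: w)
  case Nil
  then show ?case by simp
next
  case (Cons x ys)
  note td = upset_list_ConsD[OF Cons.prems(1)]
  define F where "F = rowmotion_along P le ys f"
  define v where "v = 1 / F x * (\<Sum>y\<in>downc P le x. fhat F y) * psum (upc P le x) (fhat F)"
  have step: "rowmotion_along P le (x # ys) f = F(x := v)"
    unfolding rowmotion_along_Cons toggle_def F_def v_def ..
  have upc_unchanged: "psum (upc P le u) (fhat (F(x := v))) = psum (upc P le u) (fhat F)"
    if "u = x \<or> u \<in> set ys" for u
  proof (rule psum_cong, rule fhat_eqI)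
    fix y z assume "y \<in> upc P le u" "y = Elem z"
    then have "le u z" "z \<noteq> u"
      using Elem_in_upcD[of z P le u] by auto
    then have "z \<noteq> x"
      using that td(4) by auto
    then show "(F(x := v)) z = F z"
      by simp
  qed
  show ?case
  proof (cases "w = x")
    case True
    have F_x: "F x = f x"
      unfolding F_def by (rule rowmotion_along_notin[OF td(3)])
    have downc_unchanged: "(\<Sum>y\<in>downc P le x. fhat F y) = (\<Sum>y\<in>downc P le x. fhat f y)"
    proof (rule sum.cong[OF refl], rule fhat_eqI)
      fix y z assume "y \<in> downc P le x" "y = Elem z"
      then have "le z x"
        using Elem_in_downcD[of z P le x] by simp
      then have "z \<notin> set ys"
        using td(4) by blast
      then show "F z = f z"
        by (simp add: F_def rowmotion_along_notin)
    qed
    have "(F(x := v)) x = 1 / f x * (\<Sum>y\<in>downc P le x. fhat f y) * psum (upc P le x) (fhat F)"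
      by (simp add: v_def F_x downc_unchanged)
    also have "\<dots> = 1 / f x * (\<Sum>y\<in>downc P le x. fhat f y) * psum (upc P le x) (fhat (F(x := v)))"
      using upc_unchanged[of x] by simp
    finally show ?thesis
      unfolding step True .
  next
    case False
    then have "w \<in> set ys" using Cons.prems(2) by simp
    have "(F(x := v)) w = F w"
      using False by simp
    also have "\<dots> = 1 / f w * (\<Sum>y\<in>downc P le w. fhat f y) * psum (upc P le w) (fhat F)"
      unfolding F_def by (rule Cons.IH[OF td(1) \<open>w \<in> set ys\<close>])
    also have "\<dots> = 1 / f w * (\<Sum>y\<in>downc P le w. fhat f y) * psum (upc P le w) (fhat (F(x := v)))"
      using upc_unchanged \<open>w \<in> set ys\<close> by simp
    finally show ?thesis
      unfolding step .
  qed
qed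

lemma alpha3_alpha2_eq_inverse:
  assumes "linear_extension P le xs"
    and r_eq: "\<forall>x\<in>P. r x = 1 / f x * (\<Sum>y\<in>downc P le x. fhat f y) * psum (upc P le x) (fhat r)"
  shows "\<forall>x\<in>P. alpha3 P le (alpha2 P le f) x = 1 / r x"
proof -
  define G where "G y = (case y of Top \<Rightarrow> 1 | Bot \<Rightarrow> 0 | Elem x \<Rightarrow> if x \<in> P then 1 / r x else 0)" for y
  have G_upc: "(\<Sum>y\<in>upc P le x. G y) = (\<Sum>y\<in>upc P le x. 1 / fhat r y)" for x
  proof (rule sum.cong[OF refl])
    fix y assume y: "y \<in> upc P le x"
    show "G y = 1 / fhat r y"
    proof (cases y)
      case (Elem z)
      then have "z \<in> P"
        using Elem_in_upcD[of z P le x] y by simp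
      with Elem show ?thesis
        by (simp add: G_def)
    qed (use y in \<open>simp_all add: G_def Bot_notin_upc\<close>)
  qed
  have G_rec: "G (Elem x) = alpha2 P le f x * (\<Sum>y\<in>upc P le x. G y)" if "x \<in> P" for x
  proof -
    have "G (Elem x) = 1 / r x"
      using that by (simp add: G_def)
    also have "\<dots> = f x / (\<Sum>y\<in>downc P le x. fhat f y) * (\<Sum>y\<in>upc P le x. 1 / fhat r y)"
      using r_eq that by (simp add: psum_def)
    finally show ?thesis
      by (simp add: alpha2_eq G_upc)
  qed
  have "alpha3_hat P le (alpha2 P le f) = G"
  proof (rule alpha3_hat_eqI[OF assms(1)])
    show "\<forall>x\<in>P. G (Elem x) = alpha2 P le f x * (\<Sum>y\<in>upc P le x. G y)"
      using G_rec by blast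
  qed (simp_all add: G_def)
  then show ?thesis
    by (simp add: alpha3_def G_def)
qed

theorem theorem3:
  fixes P :: "'a set" and le :: "'a \<Rightarrow> 'a \<Rightarrow> bool" and f :: "'a \<Rightarrow> real"
    and xs :: "'a list"
  assumes "finite P"
    and "partial_order_on' P le"
    and "\<forall>x\<in>P. f x > 0"
    and "linear_extension P le xs"
  shows "\<forall>x\<in>P. rowmotion_along P le xs f x = alpha1 (alpha3 P le (alpha2 P le f)) x"
proof -
  have "set xs = P"
    using assms(4) by (simp add: linear_extension_def)
  then have "\<forall>x\<in>P. rowmotion_along P le xs f x = 1 / f x * (\<Sum>y\<in>downc P le x. fhat f y) *
      psum (upc P le x) (fhat (rowmotion_along P le xs f))"
    using rowmotion_along_eq[OF linear_extension_upset_list[OF assms(4)]] by blast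
  then have "\<forall>x\<in>P. alpha3 P le (alpha2 P le f) x = 1 / rowmotion_along P le xs f x"
    by (rule alpha3_alpha2_eq_inverse[OF assms(4)])
  then show ?thesis
    by (simp add: alpha1_def)
qed

end
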